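(* Let $0\le p\le 1$ be given. Suppose that $G$ is an $n$-vertex $r$-graph with density $q\ge p$ (and $p\binom{n}{r}$ is an integer). Then $H_r(n,p)\ge (p/q)^n e^{-2/p}H(G)(1-o(1))$, where $o(1)\to 0$ as $n\to\infty$.
   Context: An $r$-graph has a vertex set and an edge set consisting of $r$-element subsets of the vertex set. An $n$-vertex $r$-graph has density $p$ if it has exactly $p\binom{n}{r}$ edges. A Hamiltonian cycle of an $n$-vertex $r$-graph $G$ is given by an ordering $v_1,\dots,v_n$ of its vertices such that for every $i$ the set $\{v_i,\dots,v_{i+r-1}\}$ (indices modulo $n$) is an edge; the cycle is identified with this set of $n$ edges. $H(G)$ is the number of Hamiltonian cycles of $G$. $H_r(n,p)$ is the maximum of $H(G)$ over all $n$-vertex $r$-graphs of density $p$. *)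

theory Defs
  imports Complex_Main
begin

definition r_graph :: "nat \<Rightarrow> nat \<Rightarrow> nat set set \<Rightarrow> bool" where
  "r_graph n r E \<longleftrightarrow> E \<subseteq> {e. e \<subseteq> {..<n} \<and> card e = r}"

definition cycle_edges :: "nat \<Rightarrow> nat \<Rightarrow> (nat \<Rightarrow> nat) \<Rightarrow> nat set set" where
  "cycle_edges n r v = {{v ((i + j) mod n) | j. j < r} | i. i < n}"

text \<open>Hamiltonian cycles of E (identified with their edge sets).\<close>
definition ham_cycles :: "nat \<Rightarrow> nat \<Rightarrow> nat set set \<Rightarrow> nat set set set" where
  "ham_cycles n r E = {cycle_edges n r v | v. bij_betw v {..<n} {..<n} \<and>
      (\<forall>i<n. {v ((i + j) mod n) | j. j < r} \<in> E)}"

definition num_ham :: "nat \<Rightarrow> nat \<Rightarrow> nat set set \<Rightarrow> nat" where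
  "num_ham n r E = card (ham_cycles n r E)"

definition H_max :: "nat \<Rightarrow> nat \<Rightarrow> real \<Rightarrow> nat" where
  "H_max r n p = Max {num_ham n r E | E. r_graph n r E \<and> real (card E) = p * real (n choose r)}"

end

theory Submission
  imports Defs
begin

text \<open>Let G have M = q N edges, N = n choose r, and let m = p N. Choose an m-edge subgraph F of G
uniformly at random. A Hamiltonian cycle of G has c \<le> n edges, so it survives in F with probability
(M - c choose m - c) / (M choose m) \<ge> ((m - n) / M)^n; averaging over F gives
H_r(n, p) \<ge> ((m - n) / M)^n H(G). As N \<ge> n (n - 1) / 2 once 2 r \<le> n, the ratio (m - n) / M is at
least (p / q) (1 - 2 / (p (n - 1))), whose n-th power is (p / q)^n e^(-2/p) (1 - o(1)).\<close>

lemma ham_cycles_conv: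
  "ham_cycles n r E = {C \<in> {cycle_edges n r v | v. bij_betw v {..<n} {..<n}}. C \<subseteq> E}"
  unfolding ham_cycles_def cycle_edges_def by blast

lemma ham_cycles_subgraph:
  "F \<subseteq> E \<Longrightarrow> ham_cycles n r F = {C \<in> ham_cycles n r E. C \<subseteq> F}"
  unfolding ham_cycles_conv by blast

lemma ham_cycle_subset: "C \<in> ham_cycles n r E \<Longrightarrow> C \<subseteq> E"
  unfolding ham_cycles_conv by blast

lemma card_cycle_edges_le: "card (cycle_edges n r v) \<le> n"
proof -
  have "cycle_edges n r v = (\<lambda>i. {v ((i + j) mod n) | j. j < r}) ` {..<n}"
    unfolding cycle_edges_def by auto
  then show ?thesis
    using card_image_le[of "{..<n}" "\<lambda>i. {v ((i + j) mod n) | j. j < r}"] by simp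
qed

lemma card_ham_cycle_le: "C \<in> ham_cycles n r E \<Longrightarrow> card C \<le> n"
  unfolding ham_cycles_conv using card_cycle_edges_le by blast

lemma finite_ham_cycles: "finite E \<Longrightarrow> finite (ham_cycles n r E)"
  by (meson Pow_iff finite_Pow_iff finite_subset ham_cycle_subset subsetI)

lemma finite_r_graph: "r_graph n r E \<Longrightarrow> finite E"
  unfolding r_graph_def by (rule finite_subset[of _ "Pow {..<n}"]) auto

lemma num_ham_le_H_max:
  assumes "r_graph n r F" "real (card F) = p * real (n choose r)"
  shows "num_ham n r F \<le> H_max r n p"
proof -
  have "{num_ham n r E | E. r_graph n r E \<and> real (card E) = p * real (n choose r)}
        \<subseteq> num_ham n r ` Pow (Pow {..<n})"
    unfolding r_graph_def by (auto intro!: imageI)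
  then have "finite {num_ham n r E | E. r_graph n r E \<and> real (card E) = p * real (n choose r)}"
    by (rule finite_subset) auto
  then show ?thesis
    unfolding H_max_def by (rule Max_ge) (use assms in blast)
qed

lemma binomial_ratio_ge_power:
  "k \<le> m \<Longrightarrow> m \<le> M \<Longrightarrow>
   real (M choose m) * ((real m - real k) / real M) ^ k \<le> real ((M - k) choose (m - k))"
proof (induction k arbitrary: M m)
  case 0
  then show ?case by simp
next
  case (Suc k)
  obtain m' M' where m': "m = Suc m'" and M': "M = Suc M'"
    using Suc.prems by (cases m; cases M) auto
  have km: "k \<le> m'" "m' \<le> M'" using Suc.prems m' M' by auto
  define a where "a = real m' - real k"
  have a: "0 \<le> a" "a \<le> real (Suc m')" using km by (auto simp: a_def)
  have step: "real (Suc M' choose Suc m') = real (Suc M') / real (Suc m') * real (M' choose m')"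
    using Suc_times_binomial_eq[of M' m'] by (simp add: field_simps flip: of_nat_mult)
  have shrink: "(a / real (Suc M')) ^ k \<le> (a / real M') ^ k"
    using a km by (cases "k = 0") (auto intro!: power_mono frac_le)
  have cancel: "S / s * B * (a / S * P) = a / s * (B * P)" if "S > 0" for S s B P :: real
    using that by (simp add: field_simps)
  have "real (M choose m) * ((real m - real (Suc k)) / real M) ^ Suc k
      = a / real (Suc m') * (real (M' choose m') * (a / real (Suc M')) ^ k)"
    unfolding m' M' step power_Suc by (simp add: a_def cancel)
  also have "\<dots> \<le> 1 * (real (M' choose m') * (a / real M') ^ k)"
    using a shrink by (intro mult_mono mult_left_mono) auto
  also have "\<dots> \<le> real ((M' - k) choose (m' - k))"
    using Suc.IH km unfolding a_def by simp
  finally show ?case using m' M' by simp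
qed

lemma card_supersets:
  assumes "finite E" "C \<subseteq> E" "card C \<le> m"
  shows "card {F. F \<subseteq> E \<and> card F = m \<and> C \<subseteq> F} = (card E - card C) choose (m - card C)"
proof -
  have fin: "finite C" using assms finite_subset by blast
  have "bij_betw (\<lambda>G. G \<union> C) {G. G \<subseteq> E - C \<and> card G = m - card C}
                               {F. F \<subseteq> E \<and> card F = m \<and> C \<subseteq> F}"
  proof (rule bij_betw_byWitness[where f' = "\<lambda>F. F - C"])
    show "(\<lambda>G. G \<union> C) ` {G. G \<subseteq> E - C \<and> card G = m - card C}
          \<subseteq> {F. F \<subseteq> E \<and> card F = m \<and> C \<subseteq> F}"
    proof (rule image_subsetI)
      fix G assume G: "G \<in> {G. G \<subseteq> E - C \<and> card G = m - card C}"
      then have "finite G" using assms(1) finite_subset by blast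
      then have "card (G \<union> C) = card G + card C" using G fin by (intro card_Un_disjoint) auto
      then show "G \<union> C \<in> {F. F \<subseteq> E \<and> card F = m \<and> C \<subseteq> F}" using G assms by auto
    qed
    show "(\<lambda>F. F - C) ` {F. F \<subseteq> E \<and> card F = m \<and> C \<subseteq> F}
          \<subseteq> {G. G \<subseteq> E - C \<and> card G = m - card C}"
      using fin by (auto simp: card_Diff_subset)
  qed auto
  then show ?thesis
    using n_subsets[of "E - C" "m - card C"] assms fin
    by (simp add: bij_betw_same_card card_Diff_subset)
qed

lemma sum_card_filter_swap:
  assumes "finite A" "finite B"
  shows "(\<Sum>a\<in>A. card {b \<in> B. R a b}) = (\<Sum>b\<in>B. card {a \<in> A. R a b})"
proof -
  have "(\<Sum>a\<in>A. card {b \<in> B. R a b}) = (\<Sum>a\<in>A. \<Sum>b\<in>B. if R a b then 1 else 0)"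
    using assms by (simp add: sum.If_cases Int_def)
  also have "\<dots> = (\<Sum>b\<in>B. \<Sum>a\<in>A. if R a b then 1 else 0)"
    by (rule sum.swap)
  also have "\<dots> = (\<Sum>b\<in>B. card {a \<in> A. R a b})"
    using assms by (simp add: sum.If_cases Int_def)
  finally show ?thesis .
qed

lemma sum_num_ham_subgraphs_ge:
  assumes fin: "finite E" and nm: "n \<le> m" and mE: "m \<le> card E"
  shows "real (card E choose m) * ((real m - real n) / real (card E)) ^ n * real (num_ham n r E)
         \<le> (\<Sum>F \<in> {F. F \<subseteq> E \<and> card F = m}. real (num_ham n r F))"
proof -
  define A where "A = {F. F \<subseteq> E \<and> card F = m}"
  define HE where "HE = ham_cycles n r E"
  define b where "b = (real m - real n) / real (card E)"
  have finA: "finite A" and finHE: "finite HE"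
    using fin finite_ham_cycles unfolding A_def HE_def by auto
  have b: "0 \<le> b" "b \<le> 1"
    using nm mE unfolding b_def by (auto simp: divide_le_eq_1)
  have per_cycle: "real (card E choose m) * b ^ n \<le> real (card {F \<in> A. C \<subseteq> F})"
    if "C \<in> HE" for C
  proof -
    have C: "C \<subseteq> E" "card C \<le> n"
      using that ham_cycle_subset card_ham_cycle_le unfolding HE_def by auto
    have "b ^ n \<le> b ^ card C" using b C by (intro power_decreasing) auto
    also have "\<dots> \<le> ((real m - real (card C)) / real (card E)) ^ card C"
      using b C unfolding b_def by (intro power_mono divide_right_mono) auto
    finally have "real (card E choose m) * b ^ n
        \<le> real (card E choose m) * ((real m - real (card C)) / real (card E)) ^ card C"
      by (intro mult_left_mono) auto
    also have "\<dots> \<le> real ((card E - card C) choose (m - card C))"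
      using C nm mE by (intro binomial_ratio_ge_power) auto
    also have "\<dots> = real (card {F \<in> A. C \<subseteq> F})"
      using card_supersets[OF fin C(1), of m] C nm unfolding A_def by (simp add: conj_ac)
    finally show ?thesis .
  qed
  have "real (card E choose m) * b ^ n * real (card HE) = (\<Sum>C\<in>HE. real (card E choose m) * b ^ n)"
    by simp
  also have "\<dots> \<le> (\<Sum>C\<in>HE. real (card {F \<in> A. C \<subseteq> F}))"
    using per_cycle by (rule sum_mono)
  also have "\<dots> = (\<Sum>F\<in>A. real (card {C \<in> HE. C \<subseteq> F}))"
    using sum_card_filter_swap[OF finA finHE, of "\<lambda>F C. C \<subseteq> F"]
    by (simp flip: of_nat_sum)
  also have "\<dots> = (\<Sum>F\<in>A. real (num_ham n r F))"
    unfolding num_ham_def HE_def A_def by (intro sum.cong) (auto simp: ham_cycles_subgraph)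
  finally show ?thesis unfolding A_def HE_def b_def num_ham_def .
qed

lemma num_ham_mult_le_H_max:
  assumes E: "r_graph n r E" and m: "real m = p * real (n choose r)"
    and nm: "n \<le> m" and mE: "m \<le> card E"
  shows "((real m - real n) / real (card E)) ^ n * real (num_ham n r E) \<le> real (H_max r n p)"
proof -
  define A where "A = {F. F \<subseteq> E \<and> card F = m}"
  have fin: "finite E" using E by (rule finite_r_graph)
  have cardA: "card A = card E choose m" unfolding A_def using n_subsets[OF fin] by simp
  have "real (card A) * (((real m - real n) / real (card E)) ^ n * real (num_ham n r E))
      \<le> (\<Sum>F\<in>A. real (num_ham n r F))"
    using sum_num_ham_subgraphs_ge[OF fin nm mE, of r] cardA unfolding A_def by (simp add: ac_simps)
  also have "\<dots> \<le> (\<Sum>F\<in>A. real (H_max r n p))"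
    using E m by (intro sum_mono) (auto simp: A_def r_graph_def intro!: num_ham_le_H_max)
  also have "\<dots> = real (card A) * real (H_max r n p)" by simp
  finally show ?thesis
    using mE cardA by (simp add: mult_le_cancel_left_pos)
qed

lemma real_choose_two: "real (n choose 2) = real n * (real n - 1) / 2"
proof -
  have "2 * (n choose 2) = n * (n - 1)"
    unfolding choose_two by (cases n) auto
  then have "2 * real (n choose 2) = real n * real (n - 1)"
    by (metis of_nat_mult of_nat_numeral)
  then show ?thesis by (cases n) auto
qed

lemma choose_ge_quadratic:
  assumes "2 \<le> r" "2 * r \<le> n"
  shows "real n * (real n - 1) / 2 \<le> real (n choose r)"
  using binomial_mono[OF assms] by (simp flip: real_choose_two)

lemma density_ratio_le_edge_fraction:
  fixes p q N :: real
  assumes p: "0 < p" "p \<le> q" and n: "2 \<le> n" and N: "real n * (real n - 1) / 2 \<le> N"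
  shows "p / q * (1 - 2 / (p * (real n - 1))) \<le> (p * N - real n) / (q * N)"
proof -
  have n1: "1 \<le> real n - 1" using n by simp
  have "2 * 1 \<le> real n * (real n - 1)" using n n1 by (intro mult_mono) auto
  then have N1: "1 \<le> N" using N by simp
  have "real n / N \<le> 2 / (real n - 1)"
    using N N1 n1 by (simp add: divide_simps mult.commute)
  moreover have "p / q * (1 - 2 / (p * (real n - 1))) = (p - 2 / (real n - 1)) / q"
  proof -
    have cancel: "p * (2 / (p * (real n - 1))) = 2 / (real n - 1)" using p by simp
    have "p / q * (1 - x) = (p - p * x) / q" for x
      by (simp add: diff_divide_distrib right_diff_distrib)
    then show ?thesis using cancel by metis
  qed
  moreover have "(p * N - real n) / (q * N) = (p - real n / N) / q"
    using N1 by (simp add: diff_divide_distrib)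
  ultimately show ?thesis
    using p by (simp add: divide_right_mono)
qed

lemma H_max_ge_density_ratio_power:
  assumes r: "2 \<le> r" "2 * r \<le> n" and pn: "2 \<le> p * (real n - 1)" and pq: "p \<le> q"
    and E: "r_graph n r E" "real (card E) = q * real (n choose r)"
    and m: "real m = p * real (n choose r)"
  shows "(p / q * (1 - 2 / (p * (real n - 1)))) ^ n * real (num_ham n r E) \<le> real (H_max r n p)"
proof -
  define N where "N = real (n choose r)"
  have NN: "real n * (real n - 1) / 2 \<le> N"
    unfolding N_def using r by (rule choose_ge_quadratic)
  have n2: "2 \<le> n" using r by simp
  have p0: "0 < p"
  proof (rule ccontr)
    assume "\<not> 0 < p"
    then have "p * (real n - 1) \<le> 0" using n2 by (intro mult_nonpos_nonneg) auto
    then show False using pn by simp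
  qed
  have "real n * 2 \<le> real n * (p * (real n - 1))" using pn by (intro mult_left_mono) auto
  then have "real n \<le> real n * (p * (real n - 1)) / 2" by simp
  also have "\<dots> = p * (real n * (real n - 1) / 2)" by simp
  also have "\<dots> \<le> real m" using NN p0 unfolding m N_def by (intro mult_left_mono) auto
  finally have nm: "n \<le> m" by simp
  have "real m \<le> real (card E)"
    using E(2) m pq by (simp add: mult_right_mono)
  then have mE: "m \<le> card E" by simp
  have "0 \<le> p / q * (1 - 2 / (p * (real n - 1)))"
    using p0 pq pn by simp
  moreover have "p / q * (1 - 2 / (p * (real n - 1))) \<le> (real m - real n) / real (card E)"
    using density_ratio_le_edge_fraction[OF p0 pq n2 NN] unfolding m E(2) N_def .
  ultimately have "(p / q * (1 - 2 / (p * (real n - 1)))) ^ n * real (num_ham n r E)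
      \<le> ((real m - real n) / real (card E)) ^ n * real (num_ham n r E)"
    by (intro mult_right_mono power_mono) auto
  also have "\<dots> \<le> real (H_max r n p)"
    using E(1) m nm mE by (rule num_ham_mult_le_H_max)
  finally show ?thesis .
qed

lemma tendsto_exp_limit_pred_sequentially:
  "(\<lambda>n. (1 + x / (real n - 1)) ^ n) \<longlonglongrightarrow> exp x"
proof -
  have "(\<lambda>j. (1 + x / real j) ^ j * (1 + x / real j)) \<longlonglongrightarrow> exp x * (1 + 0)"
    by (intro tendsto_mult tendsto_exp_limit_sequentially tendsto_add tendsto_const lim_const_over_n)
  then have "(\<lambda>j. (1 + x / (real (Suc j) - 1)) ^ Suc j) \<longlonglongrightarrow> exp x"
    by (simp add: mult.commute)
  then show ?thesis by (rule LIMSEQ_imp_Suc)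
qed

text \<open>Past the threshold, 2 r \<le> n and p (n - 1) \<ge> 2. For p = 0 the junk value 2 / 0 = 0 makes the
error vanish past the threshold, which is harmless since then (p / q)^n = 0.\<close>
definition ham_error :: "nat \<Rightarrow> real \<Rightarrow> nat \<Rightarrow> real" where
  "ham_error r p n =
    (if n < 2 * r + nat \<lceil>2 / p\<rceil> + 1 then 1 else 1 - exp (2 / p) * (1 - 2 / (p * (real n - 1))) ^ n)"

lemma ham_error_tendsto_zero: "ham_error r p \<longlonglongrightarrow> 0"
proof -
  have "(\<lambda>n. 1 - exp (2 / p) * (1 + - 2 / p / (real n - 1)) ^ n) \<longlonglongrightarrow> 1 - exp (2 / p) * exp (- 2 / p)"
    by (intro tendsto_intros tendsto_exp_limit_pred_sequentially)
  moreover have "\<forall>\<^sub>F n in sequentially. 1 - exp (2 / p) * (1 + - 2 / p / (real n - 1)) ^ n = ham_error r p n"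
    unfolding ham_error_def eventually_sequentially by (intro exI[of _ "2 * r + nat \<lceil>2 / p\<rceil> + 1"]) auto
  ultimately show ?thesis
    by (simp add: tendsto_cong flip: exp_add)
qed

theorem lemma1:
  fixes r :: nat and p :: real
  assumes "r \<ge> 2" and "0 \<le> p" and "p \<le> 1"
  shows "\<exists>\<epsilon> :: nat \<Rightarrow> real. \<epsilon> \<longlonglongrightarrow> 0 \<and>
    (\<forall>n E q. r_graph n r E \<longrightarrow> real (card E) = q * real (n choose r) \<longrightarrow> p \<le> q \<longrightarrow>
       (\<exists>k::nat. p * real (n choose r) = real k) \<longrightarrow>
       real (H_max r n p) \<ge> (p / q) ^ n * exp (- 2 / p) * real (num_ham n r E) * (1 - \<epsilon> n))"
proof (intro exI[of _ "ham_error r p"] conjI allI impI)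
  show "ham_error r p \<longlonglongrightarrow> 0" by (rule ham_error_tendsto_zero)
  fix n E q
  assume E: "r_graph n r E" "real (card E) = q * real (n choose r)" and pq: "p \<le> q"
    and "\<exists>k::nat. p * real (n choose r) = real k"
  then obtain m where m: "real m = p * real (n choose r)" by metis
  show "(p / q) ^ n * exp (- 2 / p) * real (num_ham n r E) * (1 - ham_error r p n) \<le> real (H_max r n p)"
  proof (cases "n < 2 * r + nat \<lceil>2 / p\<rceil> + 1 \<or> p = 0")
    case True
    then show ?thesis by (cases n) (auto simp: ham_error_def)
  next
    case False
    then have p0: "0 < p" and n: "2 * r \<le> n" "2 / p \<le> real n - 1"
      using assms(2) by linarith+
    then have pn: "2 \<le> p * (real n - 1)" by (simp add: field_simps)
    have err: "exp (- 2 / p) * (1 - ham_error r p n) = (1 - 2 / (p * (real n - 1))) ^ n"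
      using False by (simp add: ham_error_def mult.assoc[symmetric] flip: exp_add)
    have "(p / q) ^ n * exp (- 2 / p) * real (num_ham n r E) * (1 - ham_error r p n)
        = (p / q) ^ n * (exp (- 2 / p) * (1 - ham_error r p n)) * real (num_ham n r E)"
      by (simp only: ac_simps)
    also have "\<dots> = (p / q * (1 - 2 / (p * (real n - 1)))) ^ n * real (num_ham n r E)"
      by (simp only: err power_mult_distrib)
    also have "\<dots> \<le> real (H_max r n p)"
      using assms(1) n(1) pn pq E m by (rule H_max_ge_density_ratio_power)
    finally show ?thesis .
  qed
qed

end
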